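(* Let $\Sigma$ be a finite alphabet, $n$ a positive integer and $\varphi\in\mathrm{FO}^2_n[<]$ a unique position formula. Let $u\in\Sigma^\star$ and $i\in[1,|u|]$ with $(u,i)\models\varphi$. Then $i=r(u)$ for some ranker $r\in R_n^\star$.
   Context: Words are finite structures with universe $\{1,\dots,|w|\}$, unary predicates $Q_a$ ($a\in\Sigma$) marking positions carrying $a$, and the order $<$. $\mathrm{FO}^2_n[<]$ is first-order logic over this signature using only the variables $x,y$, with quantifier depth at most $n$; $(w,i)$ denotes $w$ with $x$ interpreted as $i$. A formula $\varphi\in\mathrm{FO}^2[<]$ with free variable $x$ is a unique position formula if for every $w\in\Sigma^\star$ there is at most one $i\in[1,|w|]$ with $(w,i)\models\varphi$. Boundary positions: $\triangleright_a(w)=\min\{i:w_i=a\}$, $\triangleleft_a(w)=\max\{i:w_i=a\}$, $\triangleright_a(w,q)=\min\{i\in[q+1,|w|]:w_i=a\}$, $\triangleleft_a(w,q)=\max\{i\in[1,q-1]:w_i=a\}$ (undefined if empty). An $n$-ranker is a sequence $r=(p_1,\dots,p_n)$ of boundary positions with $r(w)=p_1(w)$ if $n=1$, undefined if $(p_1,\dots,p_{n-1})(w)$ is undefined, else $p_n(w,(p_1,\dots,p_{n-1})(w))$. $R_n^\star$ is the set of all $j$-rankers with $j\in[1,n]$. *)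

theory Defs
  imports Main
begin

text \<open>Words over a finite alphabet 'a are lists; positions are 1..length w,
  and position i carries the letter w ! (i - 1).\<close>

datatype var = VX | VY

datatype 'a fo2 =
    Q 'a var
  | Less var var
  | Eq var var
  | Neg "'a fo2"
  | Conj "'a fo2" "'a fo2"
  | Disj "'a fo2" "'a fo2"
  | Ex var "'a fo2"
  | All var "'a fo2"

fun sat :: "'a list \<Rightarrow> (var \<Rightarrow> nat) \<Rightarrow> 'a fo2 \<Rightarrow> bool" where
  "sat w \<sigma> (Q a v) = (w ! (\<sigma> v - 1) = a)"
| "sat w \<sigma> (Less v v') = (\<sigma> v < \<sigma> v')"
| "sat w \<sigma> (Eq v v') = (\<sigma> v = \<sigma> v')"
| "sat w \<sigma> (Neg f) = (\<not> sat w \<sigma> f)"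
| "sat w \<sigma> (Conj f g) = (sat w \<sigma> f \<and> sat w \<sigma> g)"
| "sat w \<sigma> (Disj f g) = (sat w \<sigma> f \<or> sat w \<sigma> g)"
| "sat w \<sigma> (Ex v f) = (\<exists>k\<in>{1..length w}. sat w (\<sigma>(v := k)) f)"
| "sat w \<sigma> (All v f) = (\<forall>k\<in>{1..length w}. sat w (\<sigma>(v := k)) f)"

fun qdepth :: "'a fo2 \<Rightarrow> nat" where
  "qdepth (Q a v) = 0"
| "qdepth (Less v v') = 0"
| "qdepth (Eq v v') = 0"
| "qdepth (Neg f) = qdepth f"
| "qdepth (Conj f g) = max (qdepth f) (qdepth g)"
| "qdepth (Disj f g) = max (qdepth f) (qdepth g)"
| "qdepth (Ex v f) = Suc (qdepth f)"
| "qdepth (All v f) = Suc (qdepth f)"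

fun fv :: "'a fo2 \<Rightarrow> var set" where
  "fv (Q a v) = {v}"
| "fv (Less v v') = {v, v'}"
| "fv (Eq v v') = {v, v'}"
| "fv (Neg f) = fv f"
| "fv (Conj f g) = fv f \<union> fv g"
| "fv (Disj f g) = fv f \<union> fv g"
| "fv (Ex v f) = fv f - {v}"
| "fv (All v f) = fv f - {v}"

text \<open>(w,i) |= phi: x interpreted as i (y is not free, its value is irrelevant).\<close>
definition models :: "'a list \<Rightarrow> nat \<Rightarrow> 'a fo2 \<Rightarrow> bool" where
  "models w i f = sat w (\<lambda>v. i) f"

definition fo2_n :: "nat \<Rightarrow> 'a fo2 set" where
  "fo2_n n = {f. qdepth f \<le> n \<and> fv f \<subseteq> {VX}}"

definition unique_position :: "'a fo2 \<Rightarrow> bool" where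
  "unique_position f \<longleftrightarrow> fv f \<subseteq> {VX} \<and>
     (\<forall>w :: 'a list. \<forall>i j. i \<in> {1..length w} \<and> j \<in> {1..length w} \<and>
        models w i f \<and> models w j f \<longrightarrow> i = j)"

datatype 'a boundary = First 'a | Last 'a

definition opt_min :: "nat set \<Rightarrow> nat option" where
  "opt_min S = (if S = {} then None else Some (Min S))"

definition opt_max :: "nat set \<Rightarrow> nat option" where
  "opt_max S = (if S = {} then None else Some (Max S))"

fun bpos :: "'a list \<Rightarrow> 'a boundary \<Rightarrow> nat option" where
  "bpos w (First a) = opt_min {i \<in> {1..length w}. w ! (i - 1) = a}"
| "bpos w (Last a) = opt_max {i \<in> {1..length w}. w ! (i - 1) = a}"

fun bpos_from :: "'a list \<Rightarrow> 'a boundary \<Rightarrow> nat \<Rightarrow> nat option" where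
  "bpos_from w (First a) q = opt_min {i \<in> {q+1..length w}. w ! (i - 1) = a}"
| "bpos_from w (Last a) q = opt_max {i \<in> {1..q-1}. w ! (i - 1) = a}"

fun ranker_go :: "'a list \<Rightarrow> nat \<Rightarrow> 'a boundary list \<Rightarrow> nat option" where
  "ranker_go w q [] = Some q"
| "ranker_go w q (p # ps) =
     (case bpos_from w p q of None \<Rightarrow> None | Some q' \<Rightarrow> ranker_go w q' ps)"

text \<open>r(w) for a ranker r = (p_1,...,p_k), represented as a list; None = undefined.\<close>
fun ranker_eval :: "'a boundary list \<Rightarrow> 'a list \<Rightarrow> nat option" where
  "ranker_eval [] w = None"
| "ranker_eval (p # ps) w =
     (case bpos w p of None \<Rightarrow> None | Some q \<Rightarrow> ranker_go w q ps)"

definition rankers_upto :: "nat \<Rightarrow> 'a boundary list set" where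
  "rankers_upto n = {r. 1 \<le> length r \<and> length r \<le> n}"

end

theory Submission
  imports Defs
begin

text \<open>Suppose no ranker of length at most n reaches position i of u, and let w be u with the
  letter at i doubled. Duplicator wins the n-round two-pebble Ehrenfeucht-Fraisse game on u and w
  when the pebbles start on i in u and on either copy of i in w: she keeps every pebble of w either
  on a copy of its partner in u or such that no position reachable by a ranker of the remaining length
  separates the two. Spoiler can only leave such a ranker-free interval by jumping to the next or
  previous occurrence of a letter, and these jumps are ranker extensions by one step, so they stay
  in the interval one level up. Hence both copies of i satisfy \<phi> in w, contradicting uniqueness.\<close>

section \<open>Ehrenfeucht-Fraisse games for two-variable logic\<close>

fun other_var :: "var \<Rightarrow> var" where
  "other_var VX = VY"
| "other_var VY = VX"

lemma other_var_neq [simp]: "other_var v \<noteq> v"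
  by (cases v) simp_all

lemma all_var_split: "(\<forall>x. P x) \<longleftrightarrow> P v \<and> P (other_var v)"
  by (metis (full_types) other_var.elims var.exhaust)

locale ef_game =
  fixes u w :: "'a list" and n :: nat and E :: "nat \<Rightarrow> nat \<Rightarrow> nat \<Rightarrow> bool"
  assumes E_letter: "E k p p' \<Longrightarrow> u ! (p - 1) = w ! (p' - 1)"
    and E_Suc: "E (Suc k) p p' \<Longrightarrow> E k p p'"
    and E_forth: "\<lbrakk>Suc k \<le> n; E (Suc k) p p'; p \<in> {1..length u}; p' \<in> {1..length w};
      q \<in> {1..length u}\<rbrakk> \<Longrightarrow> \<exists>q'\<in>{1..length w}. E k q q' \<and> (p < q \<longleftrightarrow> p' < q') \<and> (q < p \<longleftrightarrow> q' < p')"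
    and E_back: "\<lbrakk>Suc k \<le> n; E (Suc k) p p'; p \<in> {1..length u}; p' \<in> {1..length w};
      q' \<in> {1..length w}\<rbrakk> \<Longrightarrow> \<exists>q\<in>{1..length u}. E k q q' \<and> (p < q \<longleftrightarrow> p' < q') \<and> (q < p \<longleftrightarrow> q' < p')"
begin

definition agree :: "nat \<Rightarrow> (var \<Rightarrow> nat) \<Rightarrow> (var \<Rightarrow> nat) \<Rightarrow> bool" where
  "agree k \<sigma> \<sigma>' \<longleftrightarrow>
     (\<forall>x. \<sigma> x \<in> {1..length u} \<and> \<sigma>' x \<in> {1..length w} \<and> E k (\<sigma> x) (\<sigma>' x)) \<and>
     (\<forall>x y. \<sigma> x < \<sigma> y \<longleftrightarrow> \<sigma>' x < \<sigma>' y)"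

lemma agree_update_forth:
  assumes "agree (Suc k) \<sigma> \<sigma>'" "Suc k \<le> n" "q \<in> {1..length u}"
  shows "\<exists>q'\<in>{1..length w}. agree k (\<sigma>(v := q)) (\<sigma>'(v := q'))"
proof -
  let ?x = "other_var v"
  have x: "\<sigma> ?x \<in> {1..length u}" "\<sigma>' ?x \<in> {1..length w}" "E (Suc k) (\<sigma> ?x) (\<sigma>' ?x)"
    using assms(1) unfolding agree_def by blast+
  obtain q' where q': "q' \<in> {1..length w}" "E k q q'"
    "\<sigma> ?x < q \<longleftrightarrow> \<sigma>' ?x < q'" "q < \<sigma> ?x \<longleftrightarrow> q' < \<sigma>' ?x"
    using E_forth[OF assms(2) x(3,1,2) assms(3)] by blast
  have "agree k (\<sigma>(v := q)) (\<sigma>'(v := q'))"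
    unfolding agree_def by (subst all_var_split[where v = v])+ (use x q' assms(3) E_Suc in simp)
  then show ?thesis using q'(1) by (rule bexI)
qed

lemma agree_update_back:
  assumes "agree (Suc k) \<sigma> \<sigma>'" "Suc k \<le> n" "q' \<in> {1..length w}"
  shows "\<exists>q\<in>{1..length u}. agree k (\<sigma>(v := q)) (\<sigma>'(v := q'))"
proof -
  let ?x = "other_var v"
  have x: "\<sigma> ?x \<in> {1..length u}" "\<sigma>' ?x \<in> {1..length w}" "E (Suc k) (\<sigma> ?x) (\<sigma>' ?x)"
    using assms(1) unfolding agree_def by blast+
  obtain q where q: "q \<in> {1..length u}" "E k q q'"
    "\<sigma> ?x < q \<longleftrightarrow> \<sigma>' ?x < q'" "q < \<sigma> ?x \<longleftrightarrow> q' < \<sigma>' ?x"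
    using E_back[OF assms(2) x(3,1,2) assms(3)] by blast
  have "agree k (\<sigma>(v := q)) (\<sigma>'(v := q'))"
    unfolding agree_def by (subst all_var_split[where v = v])+ (use x q assms(3) E_Suc in simp)
  then show ?thesis using q(1) by (rule bexI)
qed

lemma ex_update_agree:
  assumes IH: "\<And>\<sigma> \<sigma>'. agree k \<sigma> \<sigma>' \<Longrightarrow> P \<sigma> \<longleftrightarrow> P' \<sigma>'"
    and "agree (Suc k) \<sigma> \<sigma>'" "Suc k \<le> n"
  shows "(\<exists>q\<in>{1..length u}. P (\<sigma>(v := q))) \<longleftrightarrow> (\<exists>q'\<in>{1..length w}. P' (\<sigma>'(v := q')))"
proof
  assume "\<exists>q\<in>{1..length u}. P (\<sigma>(v := q))"
  then obtain q where q: "q \<in> {1..length u}" "P (\<sigma>(v := q))" ..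
  obtain q' where "q' \<in> {1..length w}" "agree k (\<sigma>(v := q)) (\<sigma>'(v := q'))"
    using agree_update_forth[OF assms(2,3) q(1)] ..
  then show "\<exists>q'\<in>{1..length w}. P' (\<sigma>'(v := q'))" using IH q(2) by blast
next
  assume "\<exists>q'\<in>{1..length w}. P' (\<sigma>'(v := q'))"
  then obtain q' where q': "q' \<in> {1..length w}" "P' (\<sigma>'(v := q'))" ..
  obtain q where "q \<in> {1..length u}" "agree k (\<sigma>(v := q)) (\<sigma>'(v := q'))"
    using agree_update_back[OF assms(2,3) q'(1)] ..
  then show "\<exists>q\<in>{1..length u}. P (\<sigma>(v := q))" using IH q'(2) by blast
qed

lemma sat_agree:
  "\<lbrakk>qdepth \<psi> \<le> k; k \<le> n; agree k \<sigma> \<sigma>'\<rbrakk> \<Longrightarrow> sat u \<sigma> \<psi> \<longleftrightarrow> sat w \<sigma>' \<psi>"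
proof (induction \<psi> arbitrary: k \<sigma> \<sigma>')
  case (Q a v)
  then have "E k (\<sigma> v) (\<sigma>' v)" by (simp add: agree_def)
  from E_letter[OF this] show ?case by simp
next
  case (Less v v')
  then show ?case by (simp only: agree_def sat.simps)
next
  case (Eq v v')
  then have "\<sigma> v < \<sigma> v' \<longleftrightarrow> \<sigma>' v < \<sigma>' v'" "\<sigma> v' < \<sigma> v \<longleftrightarrow> \<sigma>' v' < \<sigma>' v"
    by (simp_all add: agree_def)
  then show ?case unfolding sat.simps by (metis nat_neq_iff)
next
  case (Neg f)
  then show ?case using Neg.IH[of k \<sigma> \<sigma>'] by simp
next
  case (Conj f g)
  then show ?case using Conj.IH[of k \<sigma> \<sigma>'] by simp
next
  case (Disj f g)
  then show ?case using Disj.IH[of k \<sigma> \<sigma>'] by simp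
next
  case (Ex v f)
  then obtain k' where k': "k = Suc k'" "qdepth f \<le> k'" "k' \<le> n" by (cases k) auto
  have "agree (Suc k') \<sigma> \<sigma>'" "Suc k' \<le> n" using Ex.prems k'(1) by simp_all
  from ex_update_agree[OF Ex.IH[OF k'(2,3)] this] show ?case by simp
next
  case (All v f)
  then obtain k' where k': "k = Suc k'" "qdepth f \<le> k'" "k' \<le> n" by (cases k) auto
  have "agree (Suc k') \<sigma> \<sigma>'" "Suc k' \<le> n" using All.prems k'(1) by simp_all
  moreover have "agree k' \<sigma> \<sigma>' \<Longrightarrow> \<not> sat u \<sigma> f \<longleftrightarrow> \<not> sat w \<sigma>' f" for \<sigma> \<sigma>'
    using All.IH[OF k'(2,3)] by simp
  ultimately have "(\<exists>q\<in>{1..length u}. \<not> sat u (\<sigma>(v := q)) f) \<longleftrightarrow>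
      (\<exists>q'\<in>{1..length w}. \<not> sat w (\<sigma>'(v := q')) f)"
    using ex_update_agree[of k' "\<lambda>\<sigma>. \<not> sat u \<sigma> f" "\<lambda>\<sigma>'. \<not> sat w \<sigma>' f"] by blast
  then show ?case by simp blast
qed

lemma models_iff_if_E:
  "\<lbrakk>qdepth \<psi> \<le> n; p \<in> {1..length u}; p' \<in> {1..length w}; E n p p'\<rbrakk> \<Longrightarrow> models u p \<psi> \<longleftrightarrow> models w p' \<psi>"
  unfolding models_def by (rule sat_agree) (auto simp: agree_def)

end

section \<open>Positions reachable by rankers\<close>

lemma bpos_eq_bpos_from:
  "bpos w (First a) = bpos_from w (First a) 0"
  "bpos w (Last a) = bpos_from w (Last a) (Suc (length w))"
  by simp_all

lemma bpos_from_First_eq_Some: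
  "bpos_from w (First a) q = Some s \<longleftrightarrow>
     q < s \<and> s \<le> length w \<and> w ! (s - 1) = a \<and> (\<forall>t. q < t \<longrightarrow> t < s \<longrightarrow> w ! (t - 1) \<noteq> a)"
proof -
  let ?S = "{i \<in> {q + 1..length w}. w ! (i - 1) = a}"
  have "bpos_from w (First a) q = Some s \<longleftrightarrow> s \<in> ?S \<and> (\<forall>t\<in>?S. s \<le> t)"
    by (auto simp: opt_min_def Min_eq_iff)
  also have "\<dots> \<longleftrightarrow> q < s \<and> s \<le> length w \<and> w ! (s - 1) = a \<and> (\<forall>t. q < t \<longrightarrow> t < s \<longrightarrow> w ! (t - 1) \<noteq> a)"
    by (auto simp: Suc_le_eq)
  finally show ?thesis .
qed

lemma bpos_from_Last_eq_Some:
  "bpos_from w (Last a) q = Some s \<longleftrightarrow>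
     1 \<le> s \<and> s < q \<and> w ! (s - 1) = a \<and> (\<forall>t. s < t \<longrightarrow> t < q \<longrightarrow> w ! (t - 1) \<noteq> a)"
proof -
  let ?S = "{i \<in> {1..q - 1}. w ! (i - 1) = a}"
  have bound: "t \<le> q - Suc 0 \<longleftrightarrow> t < q \<or> t = 0" for t
    by arith
  have "bpos_from w (Last a) q = Some s \<longleftrightarrow> s \<in> ?S \<and> (\<forall>t\<in>?S. t \<le> s)"
    by (auto simp: opt_max_def Max_eq_iff)
  also have "\<dots> \<longleftrightarrow> 1 \<le> s \<and> s < q \<and> w ! (s - 1) = a \<and> (\<forall>t. s < t \<longrightarrow> t < q \<longrightarrow> w ! (t - 1) \<noteq> a)"
    by (auto simp: bound) (meson le_less_trans less_imp_le not_le)+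
  finally show ?thesis .
qed

lemma bpos_from_First_defined:
  "\<lbrakk>q < t; t \<le> length w; w ! (t - 1) = a\<rbrakk> \<Longrightarrow> \<exists>s. bpos_from w (First a) q = Some s"
  by (auto simp: opt_min_def)

lemma bpos_from_Last_defined:
  assumes "1 \<le> t" "t < q" "w ! (t - 1) = a"
  shows "\<exists>s. bpos_from w (Last a) q = Some s"
proof -
  have "t \<in> {i \<in> {1..q - 1}. w ! (i - 1) = a}" using assms by auto
  then show ?thesis by (auto simp: opt_max_def)
qed

definition ranker_positions :: "'a list \<Rightarrow> nat \<Rightarrow> nat set" where
  "ranker_positions u k = {t. \<exists>r\<in>rankers_upto k. ranker_eval r u = Some t}"

lemma ranker_positions_mono: "k \<le> k' \<Longrightarrow> ranker_positions u k \<subseteq> ranker_positions u k'"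
  by (auto simp: ranker_positions_def rankers_upto_def)

lemma ranker_go_snoc:
  "ranker_go w q (ps @ [p]) = (case ranker_go w q ps of None \<Rightarrow> None | Some q' \<Rightarrow> bpos_from w p q')"
  by (induction ps arbitrary: q) (auto split: option.splits)

lemma ranker_eval_snoc:
  "r \<noteq> [] \<Longrightarrow>
    ranker_eval (r @ [p]) w = (case ranker_eval r w of None \<Rightarrow> None | Some q \<Rightarrow> bpos_from w p q)"
  by (cases r) (auto simp: ranker_go_snoc split: option.splits)

lemma bpos_in_ranker_positions:
  "\<lbrakk>bpos u p = Some s; 1 \<le> k\<rbrakk> \<Longrightarrow> s \<in> ranker_positions u k"
  unfolding ranker_positions_def rankers_upto_def by (intro CollectI bexI[of _ "[p]"]) auto

lemma bpos_from_in_ranker_positions: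
  assumes "t \<in> ranker_positions u k" "bpos_from u p t = Some s"
  shows "s \<in> ranker_positions u (Suc k)"
proof -
  obtain r where "r \<in> rankers_upto k" "ranker_eval r u = Some t"
    using assms(1) unfolding ranker_positions_def by blast
  moreover from this(1) have "r \<noteq> []" by (auto simp: rankers_upto_def)
  ultimately have "r @ [p] \<in> rankers_upto (Suc k)" "ranker_eval (r @ [p]) u = Some s"
    using assms(2) by (auto simp: rankers_upto_def ranker_eval_snoc)
  then show ?thesis unfolding ranker_positions_def by blast
qed

lemma letter_before_ranker_free:
  assumes free: "{x..y} \<inter> ranker_positions u (Suc k) = {}"
    and z: "x \<le> z" "z \<le> y" "z \<in> {1..length u}"
  shows "\<exists>s. 1 \<le> s \<and> s < x \<and> u ! (s - 1) = u ! (z - 1)"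
proof -
  obtain s where s: "bpos u (First (u ! (z - 1))) = Some s"
    using bpos_from_First_defined[of 0 z u] z(3) unfolding bpos_eq_bpos_from by auto
  then have "s \<in> ranker_positions u (Suc k)" by (rule bpos_in_ranker_positions) simp
  moreover have "1 \<le> s" "s \<le> z" "u ! (s - 1) = u ! (z - 1)"
    using s z(3) unfolding bpos_eq_bpos_from bpos_from_First_eq_Some
    by (auto simp: not_less[symmetric])
  ultimately have "s \<notin> {x..y}" using free by blast
  then have "s < x" using \<open>s \<le> z\<close> z(2) by auto
  then show ?thesis using \<open>1 \<le> s\<close> \<open>u ! (s - 1) = u ! (z - 1)\<close> by blast
qed

lemma letter_after_ranker_free:
  assumes free: "{x..y} \<inter> ranker_positions u (Suc k) = {}"
    and z: "x \<le> z" "z \<le> y" "z \<in> {1..length u}"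
  shows "\<exists>s. y < s \<and> s \<le> length u \<and> u ! (s - 1) = u ! (z - 1)"
proof -
  obtain s where s: "bpos u (Last (u ! (z - 1))) = Some s"
    using bpos_from_Last_defined[of z "Suc (length u)" u] z(3) unfolding bpos_eq_bpos_from by auto
  then have "s \<in> ranker_positions u (Suc k)" by (rule bpos_in_ranker_positions) simp
  moreover have "z \<le> s" "s \<le> length u" "u ! (s - 1) = u ! (z - 1)"
    using s z(3) unfolding bpos_eq_bpos_from bpos_from_Last_eq_Some
    by (auto simp: not_less[symmetric])
  ultimately have "s \<notin> {x..y}" using free by blast
  then have "y < s" using \<open>z \<le> s\<close> z(1) by auto
  then show ?thesis using \<open>s \<le> length u\<close> \<open>u ! (s - 1) = u ! (z - 1)\<close> by blast
qed

text \<open>A reachable t in the extended interval is excluded because the jump from t to the next b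
  lands in \<open>{x..z}\<close>, one ranker step later.\<close>

lemma ranker_free_extend_left:
  assumes free: "{x..y} \<inter> ranker_positions u (Suc k) = {}"
    and z: "x \<le> z" "z \<le> y" "z \<le> length u" "u ! (z - 1) = b"
    and v: "v \<le> x" "\<forall>s. v < s \<longrightarrow> s < x \<longrightarrow> u ! (s - 1) \<noteq> b"
  shows "{v..z} \<inter> ranker_positions u k = {}"
proof (rule ccontr)
  assume "{v..z} \<inter> ranker_positions u k \<noteq> {}"
  then obtain t where t: "v \<le> t" "t \<le> z" "t \<in> ranker_positions u k" by auto
  have "t \<notin> {x..y}"
    using free t(3) ranker_positions_mono[of k "Suc k" u] z by auto
  then have "t < z" using t(2) z(1,2) by auto
  then obtain s where s: "bpos_from u (First b) t = Some s"
    using bpos_from_First_defined[OF \<open>t < z\<close> z(3,4)] by blast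
  have "s \<in> ranker_positions u (Suc k)" using t(3) s by (rule bpos_from_in_ranker_positions)
  moreover from s have "t < s" "u ! (s - 1) = b" "\<forall>r. t < r \<longrightarrow> r < s \<longrightarrow> u ! (r - 1) \<noteq> b"
    unfolding bpos_from_First_eq_Some by auto
  then have "x \<le> s" "s \<le> z"
    using t(1) v(2) \<open>t < z\<close> z(4) by (metis le_less_trans not_le)+
  then have "s \<in> {x..y}" using z(2) by simp
  ultimately show False using free by blast
qed

lemma ranker_free_extend_right:
  assumes free: "{x..y} \<inter> ranker_positions u (Suc k) = {}"
    and z: "x \<le> z" "z \<le> y" "1 \<le> z" "u ! (z - 1) = b"
    and v: "y \<le> v" "\<forall>s. y < s \<longrightarrow> s < v \<longrightarrow> u ! (s - 1) \<noteq> b"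
  shows "{z..v} \<inter> ranker_positions u k = {}"
proof (rule ccontr)
  assume "{z..v} \<inter> ranker_positions u k \<noteq> {}"
  then obtain t where t: "z \<le> t" "t \<le> v" "t \<in> ranker_positions u k" by auto
  have "t \<notin> {x..y}"
    using free t(3) ranker_positions_mono[of k "Suc k" u] z by auto
  then have "z < t" using t(1) z(1,2) by auto
  then obtain s where s: "bpos_from u (Last b) t = Some s"
    using bpos_from_Last_defined[OF z(3) \<open>z < t\<close> z(4)] by blast
  have "s \<in> ranker_positions u (Suc k)" using t(3) s by (rule bpos_from_in_ranker_positions)
  moreover from s have "s < t" "u ! (s - 1) = b" "\<forall>r. s < r \<longrightarrow> r < t \<longrightarrow> u ! (r - 1) \<noteq> b"
    unfolding bpos_from_Last_eq_Some by auto
  then have "z \<le> s" "s \<le> y"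
    using t(2) v(2) \<open>z < t\<close> z(4) by (metis le_less_trans not_le)+
  then have "s \<in> {x..y}" using z(1) by simp
  ultimately show False using free by blast
qed

section \<open>Collapsing a stuttered word\<close>

locale collapse =
  fixes u w :: "'a list" and h :: "nat \<Rightarrow> nat" and i n :: nat
  assumes h_range: "p' \<in> {1..length w} \<Longrightarrow> h p' \<in> {1..length u}"
    and h_letter: "p' \<in> {1..length w} \<Longrightarrow> w ! (p' - 1) = u ! (h p' - 1)"
    and h_mono: "p' \<le> q' \<Longrightarrow> h p' \<le> h q'"
    and h_surj: "q \<in> {1..length u} \<Longrightarrow> \<exists>q'\<in>{1..length w}. h q' = q"
    and h_inj_off: "\<lbrakk>h p' = h q'; p' \<noteq> q'\<rbrakk> \<Longrightarrow> h p' = i"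
    and i_unreachable: "i \<notin> ranker_positions u n"
begin

text \<open>Duplicator's invariant with k rounds left.\<close>

definition match :: "nat \<Rightarrow> nat \<Rightarrow> nat \<Rightarrow> bool" where
  "match k p p' \<longleftrightarrow> u ! (p - 1) = w ! (p' - 1) \<and>
     (p = h p' \<or> {min p (h p')..max p (h p')} \<inter> ranker_positions u k = {})"

lemma match_Suc: "match (Suc k) p p' \<Longrightarrow> match k p p'"
proof -
  have "ranker_positions u k \<subseteq> ranker_positions u (Suc k)" by (rule ranker_positions_mono) simp
  then show "match (Suc k) p p' \<Longrightarrow> match k p p'" unfolding match_def by auto
qed

lemma match_image: "p' \<in> {1..length w} \<Longrightarrow> match k (h p') p'"
  using h_letter by (simp add: match_def)

lemma less_if_h_less: "h q' < h p' \<Longrightarrow> q' < p'"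
  using h_mono[of p' q'] by linarith

lemma preimage_with_letter:
  assumes "s \<in> {1..length u}"
  shows "\<exists>s'\<in>{1..length w}. h s' = s \<and> w ! (s' - 1) = u ! (s - 1)"
proof -
  obtain s' where "s' \<in> {1..length w}" "h s' = s" using h_surj[OF assms] ..
  then show ?thesis using h_letter by auto
qed

lemma image_letter_free:
  assumes "p' \<in> {1..length w}" "\<forall>t. q' < t \<longrightarrow> t < p' \<longrightarrow> w ! (t - 1) \<noteq> b"
  shows "\<forall>s. h q' < s \<longrightarrow> s < h p' \<longrightarrow> u ! (s - 1) \<noteq> b"
proof (intro allI impI notI)
  fix s assume s: "h q' < s" "s < h p'" "u ! (s - 1) = b"
  then have "s \<in> {1..length u}" using h_range[OF assms(1)] by auto
  then obtain s' where "s' \<in> {1..length w}" "h s' = s" "w ! (s' - 1) = b"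
    using preimage_with_letter s(3) by metis
  moreover have "q' < s'" "s' < p'" using less_if_h_less s(1,2) \<open>h s' = s\<close> by auto
  ultimately show False using assms(2) by blast
qed

lemma match_ranker_free:
  assumes "k \<le> n" "match k p p'" "q' \<noteq> p'" "h q' \<in> {min p (h p')..max p (h p')}"
  shows "{min p (h p')..max p (h p')} \<inter> ranker_positions u k = {}"
proof (cases "p = h p'")
  case True
  then have "h p' = i" using assms(3,4) h_inj_off[of p' q'] by auto
  then show ?thesis using True i_unreachable ranker_positions_mono[OF assms(1)] by auto
next
  case False
  then show ?thesis using assms(2) by (simp add: match_def)
qed

lemma forth_below:
  assumes "match (Suc k) p p'" "p' \<in> {1..length w}" "q \<in> {1..length u}" "h p' \<le> q" "q < p"
  shows "\<exists>q'\<in>{1..length w}. match k q q' \<and> q' < p'"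
proof -
  define b where "b = u ! (q - 1)"
  have free: "{h p'..p} \<inter> ranker_positions u (Suc k) = {}"
    using assms(1,4,5) by (auto simp: match_def)
  obtain s where s: "1 \<le> s" "s < h p'" "u ! (s - 1) = b"
    using letter_before_ranker_free[OF free assms(4)] assms(3,5) b_def by auto
  then obtain s' where "s' \<in> {1..length w}" "h s' = s" "w ! (s' - 1) = b"
    using preimage_with_letter[of s] h_range[OF assms(2)] by auto
  moreover have "s' < p'" using less_if_h_less s(2) \<open>h s' = s\<close> by simp
  ultimately obtain q' where "bpos_from w (Last b) p' = Some q'"
    using bpos_from_Last_defined[of s' p' w b] by auto
  then have q': "1 \<le> q'" "q' < p'" "w ! (q' - 1) = b" "\<forall>t. q' < t \<longrightarrow> t < p' \<longrightarrow> w ! (t - 1) \<noteq> b"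
    unfolding bpos_from_Last_eq_Some by auto
  have "h q' \<le> h p'" using h_mono q'(2) by simp
  have "{h q'..q} \<inter> ranker_positions u k = {}"
    by (rule ranker_free_extend_left[OF free assms(4)])
      (use assms(3,5) b_def \<open>h q' \<le> h p'\<close> image_letter_free[OF assms(2) q'(4)] in simp_all)
  moreover have "min q (h q') = h q'" "max q (h q') = q" using \<open>h q' \<le> h p'\<close> assms(4) by simp_all
  ultimately have "match k q q'" using q'(3) unfolding match_def b_def by simp
  then show ?thesis using q'(1,2) assms(2) by (intro bexI[of _ q']) auto
qed

lemma forth_above:
  assumes "match (Suc k) p p'" "p' \<in> {1..length w}" "q \<in> {1..length u}" "p < q" "q \<le> h p'"
  shows "\<exists>q'\<in>{1..length w}. match k q q' \<and> p' < q'"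
proof -
  define b where "b = u ! (q - 1)"
  have free: "{p..h p'} \<inter> ranker_positions u (Suc k) = {}"
    using assms(1,4,5) by (auto simp: match_def)
  obtain s where s: "h p' < s" "s \<le> length u" "u ! (s - 1) = b"
    using letter_after_ranker_free[OF free _ assms(5)] assms(3,4) b_def by auto
  then obtain s' where "s' \<in> {1..length w}" "h s' = s" "w ! (s' - 1) = b"
    using preimage_with_letter[of s] h_range[OF assms(2)] by auto
  moreover have "p' < s'" using less_if_h_less s(1) \<open>h s' = s\<close> by simp
  ultimately obtain q' where "bpos_from w (First b) p' = Some q'"
    using bpos_from_First_defined[of p' s' w b] by auto
  then have q': "p' < q'" "q' \<le> length w" "w ! (q' - 1) = b" "\<forall>t. p' < t \<longrightarrow> t < q' \<longrightarrow> w ! (t - 1) \<noteq> b"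
    unfolding bpos_from_First_eq_Some by auto
  have "h p' \<le> h q'" using h_mono q'(1) by simp
  have q'_range: "q' \<in> {1..length w}" using q'(1,2) by simp
  have "{q..h q'} \<inter> ranker_positions u k = {}"
    by (rule ranker_free_extend_right[OF free _ assms(5)])
      (use assms(3,4) b_def \<open>h p' \<le> h q'\<close> image_letter_free[OF q'_range q'(4)] in simp_all)
  moreover have "min q (h q') = q" "max q (h q') = h q'" using \<open>h p' \<le> h q'\<close> assms(5) by simp_all
  ultimately have "match k q q'" using q'(3) unfolding match_def b_def by simp
  then show ?thesis using q'(1) q'_range by (intro bexI[of _ q']) auto
qed


lemma back_below:
  assumes "Suc k \<le> n" "match (Suc k) p p'" "p \<in> {1..length u}" "p' \<in> {1..length w}"
    "q' \<in> {1..length w}" "q' < p'" "p \<le> h q'"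
  shows "\<exists>q\<in>{1..length u}. match k q q' \<and> q < p"
proof -
  define b where "b = w ! (q' - 1)"
  have "h q' \<le> h p'" using h_mono assms(6) by simp
  moreover have "min p (h p') = p" "max p (h p') = h p'" using assms(7) \<open>h q' \<le> h p'\<close> by simp_all
  moreover have "q' \<noteq> p'" using assms(6) by simp
  ultimately have free: "{p..h p'} \<inter> ranker_positions u (Suc k) = {}"
    using match_ranker_free[OF assms(1,2)] assms(7) by simp
  have hq': "h q' \<in> {1..length u}" "u ! (h q' - 1) = b"
    using h_range[OF assms(5)] h_letter[OF assms(5)] b_def by simp_all
  obtain s where "1 \<le> s" "s < p" "u ! (s - 1) = b"
    using letter_before_ranker_free[OF free assms(7) \<open>h q' \<le> h p'\<close> hq'(1)] hq'(2) by auto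
  then obtain q where "bpos_from u (Last b) p = Some q"
    using bpos_from_Last_defined[of s p u b] by auto
  then have q: "1 \<le> q" "q < p" "u ! (q - 1) = b" "\<forall>t. q < t \<longrightarrow> t < p \<longrightarrow> u ! (t - 1) \<noteq> b"
    unfolding bpos_from_Last_eq_Some by auto
  have "{q..h q'} \<inter> ranker_positions u k = {}"
    by (rule ranker_free_extend_left[OF free assms(7) \<open>h q' \<le> h p'\<close>])
      (use hq' q in simp_all)
  moreover have "min q (h q') = q" "max q (h q') = h q'" using q(2) assms(7) by simp_all
  ultimately have "match k q q'" using q(3) unfolding match_def b_def by simp
  then show ?thesis using q(1,2) assms(3) by (intro bexI[of _ q]) auto
qed

lemma back_above:
  assumes "Suc k \<le> n" "match (Suc k) p p'" "p \<in> {1..length u}" "p' \<in> {1..length w}"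
    "q' \<in> {1..length w}" "p' < q'" "h q' \<le> p"
  shows "\<exists>q\<in>{1..length u}. match k q q' \<and> p < q"
proof -
  define b where "b = w ! (q' - 1)"
  have "h p' \<le> h q'" using h_mono assms(6) by simp
  moreover have "min p (h p') = h p'" "max p (h p') = p" using assms(7) \<open>h p' \<le> h q'\<close> by simp_all
  moreover have "q' \<noteq> p'" using assms(6) by simp
  ultimately have free: "{h p'..p} \<inter> ranker_positions u (Suc k) = {}"
    using match_ranker_free[OF assms(1,2)] assms(7) by simp
  have hq': "h q' \<in> {1..length u}" "u ! (h q' - 1) = b"
    using h_range[OF assms(5)] h_letter[OF assms(5)] b_def by simp_all
  obtain s where "p < s" "s \<le> length u" "u ! (s - 1) = b"
    using letter_after_ranker_free[OF free \<open>h p' \<le> h q'\<close> assms(7) hq'(1)] hq'(2) by auto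
  then obtain q where "bpos_from u (First b) p = Some q"
    using bpos_from_First_defined[of p s u b] by auto
  then have q: "p < q" "q \<le> length u" "u ! (q - 1) = b" "\<forall>t. p < t \<longrightarrow> t < q \<longrightarrow> u ! (t - 1) \<noteq> b"
    unfolding bpos_from_First_eq_Some by auto
  have "{h q'..q} \<inter> ranker_positions u k = {}"
    by (rule ranker_free_extend_right[OF free \<open>h p' \<le> h q'\<close> assms(7)])
      (use hq' q in simp_all)
  moreover have "min q (h q') = h q'" "max q (h q') = q" using q(1) assms(7) by simp_all
  ultimately have "match k q q'" using q(3) unfolding match_def b_def by simp
  then show ?thesis using q(1,2) by (intro bexI[of _ q]) auto
qed

lemma match_forth:
  assumes "match (Suc k) p p'" "p' \<in> {1..length w}" "q \<in> {1..length u}"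
  shows "\<exists>q'\<in>{1..length w}. match k q q' \<and> (p < q \<longleftrightarrow> p' < q') \<and> (q < p \<longleftrightarrow> q' < p')"
proof -
  consider "q = p" | "q < p" "q < h p'" | "q < p" "h p' \<le> q" | "p < q" "h p' < q"
    | "p < q" "q \<le> h p'"
    by linarith
  then show ?thesis
  proof cases
    case 1
    then show ?thesis using match_Suc[OF assms(1)] assms(2) by (intro bexI[of _ p']) auto
  next
    case 2
    obtain q' where "q' \<in> {1..length w}" "h q' = q" using h_surj[OF assms(3)] ..
    moreover from this have "q' < p'" using less_if_h_less 2(2) by simp
    ultimately show ?thesis using match_image 2(1) by (intro bexI[of _ q']) auto
  next
    case 3
    then show ?thesis using forth_below[OF assms(1,2,3)] by auto
  next
    case 4
    obtain q' where "q' \<in> {1..length w}" "h q' = q" using h_surj[OF assms(3)] ..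
    moreover from this have "p' < q'" using less_if_h_less 4(2) by simp
    ultimately show ?thesis using match_image 4(1) by (intro bexI[of _ q']) auto
  next
    case 5
    then show ?thesis using forth_above[OF assms(1,2,3)] by auto
  qed
qed

lemma match_back:
  assumes "Suc k \<le> n" "match (Suc k) p p'" "p \<in> {1..length u}" "p' \<in> {1..length w}"
    "q' \<in> {1..length w}"
  shows "\<exists>q\<in>{1..length u}. match k q q' \<and> (p < q \<longleftrightarrow> p' < q') \<and> (q < p \<longleftrightarrow> q' < p')"
proof -
  consider "q' = p'" | "q' < p'" "h q' < p" | "q' < p'" "p \<le> h q'" | "p' < q'" "p < h q'"
    | "p' < q'" "h q' \<le> p"
    by linarith
  then show ?thesis
  proof cases
    case 1
    then show ?thesis using match_Suc[OF assms(2)] assms(3) by (intro bexI[of _ p]) auto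
  next
    case 2
    then show ?thesis
      using match_image[OF assms(5)] h_range[OF assms(5)] by (intro bexI[of _ "h q'"]) auto
  next
    case 3
    then show ?thesis using back_below[OF assms] by auto
  next
    case 4
    then show ?thesis
      using match_image[OF assms(5)] h_range[OF assms(5)] by (intro bexI[of _ "h q'"]) auto
  next
    case 5
    then show ?thesis using back_above[OF assms] by auto
  qed
qed

sublocale ef_game u w n match
proof
  show "u ! (p - 1) = w ! (p' - 1)" if "match k p p'" for k p p'
    using that by (simp add: match_def)
  show "match k p p'" if "match (Suc k) p p'" for k p p'
    using that by (rule match_Suc)
  show "\<exists>q'\<in>{1..length w}. match k q q' \<and> (p < q \<longleftrightarrow> p' < q') \<and> (q < p \<longleftrightarrow> q' < p')"
    if "Suc k \<le> n" "match (Suc k) p p'" "p \<in> {1..length u}" "p' \<in> {1..length w}"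
      "q \<in> {1..length u}"
    for k p p' q
    by (rule match_forth[OF that(2,4,5)])
  show "\<exists>q\<in>{1..length u}. match k q q' \<and> (p < q \<longleftrightarrow> p' < q') \<and> (q < p \<longleftrightarrow> q' < p')"
    if "Suc k \<le> n" "match (Suc k) p p'" "p \<in> {1..length u}" "p' \<in> {1..length w}"
      "q' \<in> {1..length w}"
    for k p p' q'
    by (rule match_back[OF that])
qed

end

definition stutter :: "'a list \<Rightarrow> nat \<Rightarrow> 'a list" where
  "stutter u i = take i u @ u ! (i - 1) # drop i u"

definition unstutter :: "nat \<Rightarrow> nat \<Rightarrow> nat" where
  "unstutter i p' = (if p' \<le> i then p' else p' - 1)"

lemma length_stutter: "i \<le> length u \<Longrightarrow> length (stutter u i) = Suc (length u)"
  by (simp add: stutter_def)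

lemma nth_stutter:
  assumes "i \<in> {1..length u}" "p' \<in> {1..Suc (length u)}"
  shows "stutter u i ! (p' - 1) = u ! (unstutter i p' - 1)"
proof -
  consider "p' \<le> i" | "p' = Suc i" | "Suc i < p'" by linarith
  then show ?thesis
  proof cases
    case 1
    then show ?thesis using assms by (simp add: stutter_def unstutter_def nth_append)
  next
    case 2
    then show ?thesis using assms by (simp add: stutter_def unstutter_def nth_append)
  next
    case 3
    define m where "m = p' - i - 2"
    have "p' = i + m + 2" using 3 by (simp add: m_def)
    then show ?thesis using assms by (simp add: stutter_def unstutter_def nth_append)
  qed
qed

lemma collapse_stutter:
  assumes "i \<in> {1..length u}" "i \<notin> ranker_positions u n"
  shows "collapse u (stutter u i) (unstutter i) i n"
proof
  have len: "length (stutter u i) = Suc (length u)" using assms(1) by (simp add: length_stutter)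
  show "unstutter i p' \<in> {1..length u}" if "p' \<in> {1..length (stutter u i)}" for p'
    using that assms(1) len by (auto simp: unstutter_def)
  show "stutter u i ! (p' - 1) = u ! (unstutter i p' - 1)"
    if "p' \<in> {1..length (stutter u i)}" for p'
    using nth_stutter assms(1) that len by simp
  show "unstutter i p' \<le> unstutter i q'" if "p' \<le> q'" for p' q'
    using that by (auto simp: unstutter_def)
  show "\<exists>q'\<in>{1..length (stutter u i)}. unstutter i q' = q" if "q \<in> {1..length u}" for q
  proof (cases "q \<le> i")
    case True
    then show ?thesis using that len by (intro bexI[of _ q]) (auto simp: unstutter_def)
  next
    case False
    then show ?thesis using that len by (intro bexI[of _ "Suc q"]) (auto simp: unstutter_def)
  qed
  show "unstutter i p' = i" if "unstutter i p' = unstutter i q'" "p' \<noteq> q'" for p' q'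
    using that by (auto simp: unstutter_def split: if_splits)
qed (rule assms(2))

theorem lemma3p11:
  fixes \<phi> :: "('a::finite) fo2" and n :: nat and u :: "'a list" and i :: nat
  assumes "n \<ge> 1"
    and "\<phi> \<in> fo2_n n"
    and "unique_position \<phi>"
    and "i \<in> {1..length u}"
    and "models u i \<phi>"
  shows "\<exists>r \<in> rankers_upto n. ranker_eval r u = Some i"
proof (rule ccontr)
  assume "\<not> (\<exists>r \<in> rankers_upto n. ranker_eval r u = Some i)"
  then have "i \<notin> ranker_positions u n" by (simp add: ranker_positions_def)
  with assms(4) interpret collapse u "stutter u i" "unstutter i" i n
    by (rule collapse_stutter)
  have positions: "i \<in> {1..length (stutter u i)}" "Suc i \<in> {1..length (stutter u i)}"
    using assms(4) by (auto simp: length_stutter)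
  have "unstutter i i = i" "unstutter i (Suc i) = i" by (simp_all add: unstutter_def)
  then have "match n i i" "match n i (Suc i)"
    using match_image[OF positions(1)] match_image[OF positions(2)] by simp_all
  moreover have "qdepth \<phi> \<le> n" using assms(2) by (simp add: fo2_n_def)
  ultimately have "models (stutter u i) i \<phi>" "models (stutter u i) (Suc i) \<phi>"
    using models_iff_if_E assms(4,5) positions by blast+
  then show False using assms(3) positions unfolding unique_position_def by fastforce
qed

end
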